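(* Let $\Omega\subset\mathbb{R}^n$ be a bounded domain with smooth boundary and outward normal $\nu$, let $a,b,c,m,d_1,d_2>0$, and let $k:\Omega\to\mathbb{R}$ satisfy $k\in C^1(\Omega)$, $k\ge0$, and $k$ does not vanish identically on any subset (or finite union of subsets) of $\Omega$ of positive measure. Let $\widehat{k}=\min_{x\in\Omega}k(x)$ and $\widetilde{k}=\max_{x\in\Omega}k(x)$. Let $(u,v)$ solve $$u_t=d_1\Delta u+bu(1-u-cv),\qquad v_t=d_2\Delta v+v\Big(\frac{1}{1+k(x)u}-v-au-muv\Big)\quad\text{in }\Omega,$$ let $(\widehat u,\widehat v)$ solve the same system with $k(x)$ replaced by the constant $\widehat{k}$, and let $(\widetilde u,\widetilde v)$ solve the same system with $k(x)$ replaced by the constant $\widetilde{k}$, all with homogeneous Neumann boundary conditions $\partial_\nu(\cdot)=0$ on $\partial\Omega$ and the same spatially homogeneous positive initial data $u(x,0)\equiv u_0>0$, $v(x,0)\equiv v_0>0$. Then the pointwise comparison $\widetilde v\le v\le\widehat v$ holds.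
   Context: Solutions are classical, global and nonnegative. The constant-fear systems are $\widehat u_t=d_1\Delta\widehat u+b\widehat u(1-\widehat u-c\widehat v)$, $\widehat v_t=d_2\Delta\widehat v+\widehat v(\frac{1}{1+\widehat k\widehat u}-\widehat v-a\widehat u-m\widehat u\widehat v)$ and $\widetilde u_t=d_1\Delta\widetilde u+b\widetilde u(1-\widetilde u-c\widetilde v)$, $\widetilde v_t=d_2\Delta\widetilde v+\widetilde v(\frac{1}{1+\widetilde k\widetilde u}-\widetilde v-a\widetilde u-m\widetilde u\widetilde v)$. *)

theory Defs
  imports "HOL-Analysis.Analysis"
begin

definition pdir :: "'n::finite \<Rightarrow> (real^'n \<Rightarrow> real) \<Rightarrow> real^'n \<Rightarrow> real" where
  "pdir i f x = deriv (\<lambda>s. f (x + s *\<^sub>R axis i 1)) 0"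

definition pdir_exists :: "'n::finite \<Rightarrow> (real^'n \<Rightarrow> real) \<Rightarrow> real^'n \<Rightarrow> bool" where
  "pdir_exists i f x \<longleftrightarrow> (\<lambda>s. f (x + s *\<^sub>R axis i 1)) differentiable (at 0)"

text \<open>Iterated partial derivatives; the list gives the directions (innermost last).\<close>
fun iter_pd :: "'n::finite list \<Rightarrow> (real^'n \<Rightarrow> real) \<Rightarrow> real^'n \<Rightarrow> real" where
  "iter_pd [] f = f"
| "iter_pd (i # is) f = pdir i (iter_pd is f)"

definition smooth_fn :: "(real^'n::finite \<Rightarrow> real) \<Rightarrow> bool" where
  "smooth_fn f \<longleftrightarrow> (\<forall>is. continuous_on UNIV (iter_pd is f) \<and> (\<forall>i x. pdir_exists i (iter_pd is f) x))"

definition grad :: "(real^'n::finite \<Rightarrow> real) \<Rightarrow> real^'n \<Rightarrow> real^'n" where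
  "grad f x = (\<chi> i. pdir i f x)"

definition lap :: "(real^'n::finite \<Rightarrow> real) \<Rightarrow> real^'n \<Rightarrow> real" where
  "lap f x = (\<Sum>i\<in>UNIV. pdir i (pdir i f) x)"

definition smooth_bdd_domain :: "(real^'n::finite) set \<Rightarrow> (real^'n \<Rightarrow> real) \<Rightarrow> bool" where
  "smooth_bdd_domain \<Omega> \<phi> \<longleftrightarrow> open \<Omega> \<and> connected \<Omega> \<and> bounded \<Omega> \<and> \<Omega> \<noteq> {} \<and>
     smooth_fn \<phi> \<and> \<Omega> = {x. \<phi> x < 0} \<and> frontier \<Omega> = {x. \<phi> x = 0} \<and>
     (\<forall>x\<in>frontier \<Omega>. grad \<phi> x \<noteq> 0)"

definition outward_normal :: "(real^'n::finite \<Rightarrow> real) \<Rightarrow> real^'n \<Rightarrow> real^'n" where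
  "outward_normal \<phi> x = grad \<phi> x /\<^sub>R norm (grad \<phi> x)"

definition tder :: "(real^'n::finite \<Rightarrow> real \<Rightarrow> real) \<Rightarrow> real^'n \<Rightarrow> real \<Rightarrow> real" where
  "tder w x t = deriv (\<lambda>s. w x s) t"

text \<open>Classical regularity (C^{2,1} in Omega x (0,inf), continuous on closure(Omega) x [0,inf))
  together with homogeneous Neumann boundary condition.\<close>
definition classical_neumann ::
  "(real^'n::finite) set \<Rightarrow> (real^'n \<Rightarrow> real^'n) \<Rightarrow> (real^'n \<Rightarrow> real \<Rightarrow> real) \<Rightarrow> bool" where
  "classical_neumann \<Omega> \<nu> w \<longleftrightarrow>
     continuous_on (closure \<Omega> \<times> {0..}) (\<lambda>p. w (fst p) (snd p)) \<and>
     (\<forall>x\<in>\<Omega>. \<forall>t>0. (\<lambda>s. w x s) differentiable (at t)) \<and>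
     continuous_on (\<Omega> \<times> {0<..}) (\<lambda>p. tder w (fst p) (snd p)) \<and>
     (\<forall>x\<in>\<Omega>. \<forall>t>0. \<forall>i. pdir_exists i (\<lambda>y. w y t) x) \<and>
     (\<forall>x\<in>\<Omega>. \<forall>t>0. \<forall>i j. pdir_exists j (pdir i (\<lambda>y. w y t)) x) \<and>
     (\<forall>i. continuous_on (\<Omega> \<times> {0<..}) (\<lambda>p. pdir i (\<lambda>y. w y (snd p)) (fst p))) \<and>
     (\<forall>i j. continuous_on (\<Omega> \<times> {0<..}) (\<lambda>p. pdir j (pdir i (\<lambda>y. w y (snd p))) (fst p))) \<and>
     (\<forall>t>0. \<forall>x\<in>frontier \<Omega>. \<exists>D. ((\<lambda>y. w y t) has_derivative D) (at x within closure \<Omega>) \<and> D (\<nu> x) = 0)"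

definition fear_solution ::
  "(real^'n::finite) set \<Rightarrow> (real^'n \<Rightarrow> real^'n) \<Rightarrow> real \<Rightarrow> real \<Rightarrow> real \<Rightarrow> real \<Rightarrow> real \<Rightarrow> real \<Rightarrow>
   (real^'n \<Rightarrow> real) \<Rightarrow> real \<Rightarrow> real \<Rightarrow> (real^'n \<Rightarrow> real \<Rightarrow> real) \<Rightarrow> (real^'n \<Rightarrow> real \<Rightarrow> real) \<Rightarrow> bool" where
  "fear_solution \<Omega> \<nu> a b c m d1 d2 K u0 v0 u v \<longleftrightarrow>
     classical_neumann \<Omega> \<nu> u \<and> classical_neumann \<Omega> \<nu> v \<and>
     (\<forall>x\<in>closure \<Omega>. \<forall>t\<ge>0. u x t \<ge> 0 \<and> v x t \<ge> 0) \<and>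
     (\<forall>x\<in>closure \<Omega>. u x 0 = u0 \<and> v x 0 = v0) \<and>
     (\<forall>x\<in>\<Omega>. \<forall>t>0.
        tder u x t = d1 * lap (\<lambda>y. u y t) x + b * u x t * (1 - u x t - c * v x t) \<and>
        tder v x t = d2 * lap (\<lambda>y. v y t) x
           + v x t * (1 / (1 + K x * u x t) - v x t - a * u x t - m * u x t * v x t))"

end

theory Submission
  imports Defs
begin

(*
  Both inequalities are instances of one comparison principle for two fear functions
  Ka <= Kb (Ka = inf k, Kb = k, and Ka = k, Kb = sup k): the system is competitive and the
  fear response 1 / (1 + K u) decreases in K, so the solutions satisfy u1 <= u2 and v2 <= v1.

  To prove it, the differences u2 - u1 and v1 - v2 are raised by eps * exp (theta t) * (C + phi),
  where phi is the defining function of the domain and C + phi >= 1 on its closure. Both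
  perturbed differences are positive at t = 0. At the first time one of them vanishes, it
  attains its minimum 0 over the closure at some point xs. On the boundary this is impossible:
  the Neumann condition makes the solutions stationary to first order in the normal direction,
  while phi strictly decreases inward. In the interior the minimum bounds the Laplacian of the
  difference from below and its time derivative from above, whereas the reaction terms satisfy
  one-sided Lipschitz bounds; a rate theta exceeding the resulting constants gives a
  contradiction. Letting eps -> 0 yields the comparison.
*)

section \<open>Partial derivatives\<close>

lemma sum_axis_component:
  fixes w :: "real^'n::finite"
  assumes "finite S"
  shows "(\<Sum>i\<in>S. w$i *\<^sub>R axis i 1) $ k = (if k \<in> S then w$k else 0)"
  using assms by (simp add: axis_def if_distrib[of "\<lambda>z. _ * z"] cong: if_cong)

lemma sum_axis_UNIV:
  fixes w :: "real^'n::finite"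
  shows "(\<Sum>i\<in>UNIV. w$i *\<^sub>R axis i 1) = w"
  using basis_expansion[of w] by (simp add: scalar_mult_eq_scaleR)

lemma MVT_from_0:
  fixes g g' :: "real \<Rightarrow> real"
  assumes "\<And>s. (g has_real_derivative g' s) (at s)"
  obtains \<xi> where "\<bar>\<xi>\<bar> \<le> \<bar>h\<bar>" "g h - g 0 = h * g' \<xi>"
proof (cases h "0 :: real" rule: linorder_cases)
  case less
  then obtain z where "h < z" "z < 0" "g 0 - g h = (0 - h) * g' z" using MVT2[of h 0 g g'] assms by blast
  then show ?thesis by (intro that[of z]) (auto simp: algebra_simps)
next
  case equal
  then show ?thesis by (intro that[of 0]) auto
next
  case greater
  then obtain z where "0 < z" "z < h" "g h - g 0 = (h - 0) * g' z" using MVT2[of 0 h g g'] assms by blast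
  then show ?thesis by (intro that[of z]) auto
qed

lemma pdir_has_real_derivative_along_axis:
  assumes "pdir_exists i f (x + s *\<^sub>R axis i 1)"
  shows "((\<lambda>r. f (x + r *\<^sub>R axis i 1)) has_real_derivative pdir i f (x + s *\<^sub>R axis i 1)) (at s)"
proof -
  have "((\<lambda>r. f ((x + s *\<^sub>R axis i 1) + r *\<^sub>R axis i 1)) has_real_derivative pdir i f (x + s *\<^sub>R axis i 1)) (at 0)"
    using assms unfolding pdir_exists_def pdir_def by (simp add: DERIV_deriv_iff_real_differentiable)
  moreover have "(\<lambda>r. f ((x + s *\<^sub>R axis i 1) + r *\<^sub>R axis i 1)) = (\<lambda>r. f (x + (r + s) *\<^sub>R axis i 1))"
    by (simp add: algebra_simps)
  ultimately show ?thesis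
    using DERIV_shift[of "\<lambda>r. f (x + r *\<^sub>R axis i 1)" _ 0 s] by simp
qed

lemma pdir_axis_sum_estimate:
  fixes f :: "real^'n::finite \<Rightarrow> real"
  assumes ex: "\<And>i y. pdir_exists i f y"
    and near: "\<And>i y. norm (y - x) \<le> norm w \<Longrightarrow> \<bar>pdir i f y - pdir i f x\<bar> \<le> e"
    and "finite S"
  shows "\<bar>f (x + (\<Sum>i\<in>S. w$i *\<^sub>R axis i 1)) - f x - (\<Sum>i\<in>S. w$i * pdir i f x)\<bar> \<le> e * card S * norm w"
  using \<open>finite S\<close>
proof (induction S rule: finite_induct)
  case empty then show ?case by simp
next
  case (insert j S)
  define y where "y = x + (\<Sum>i\<in>S. w$i *\<^sub>R axis i 1)"
  obtain \<xi> where \<xi>: "\<bar>\<xi>\<bar> \<le> \<bar>w$j\<bar>"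
    "f (y + w$j *\<^sub>R axis j 1) - f (y + 0 *\<^sub>R axis j 1) = w$j * pdir j f (y + \<xi> *\<^sub>R axis j 1)"
    using MVT_from_0[OF pdir_has_real_derivative_along_axis[OF ex]] .
  have "norm (y + \<xi> *\<^sub>R axis j 1 - x) \<le> norm w"
  proof (rule norm_le_componentwise_cart)
    fix k
    have "(y + \<xi> *\<^sub>R axis j 1 - x) $ k = (if k \<in> S then w$k else 0) + (if k = j then \<xi> else 0)"
      using insert.hyps(1) sum_axis_component[of S w k] by (simp add: y_def axis_def del: sum_component)
    then show "norm ((y + \<xi> *\<^sub>R axis j 1 - x) $ k) \<le> norm (w $ k)"
      using \<xi>(1) insert.hyps(2) by auto
  qed
  then have "\<bar>pdir j f (y + \<xi> *\<^sub>R axis j 1) - pdir j f x\<bar> * \<bar>w$j\<bar> \<le> e * norm w"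
    using near[of x] by (intro mult_mono near) (auto simp: component_le_norm_cart)
  then have step: "\<bar>f (y + w$j *\<^sub>R axis j 1) - f y - w$j * pdir j f x\<bar> \<le> e * norm w"
    using \<xi>(2) by (simp add: abs_mult[symmetric] algebra_simps)
  have "x + (\<Sum>i\<in>insert j S. w$i *\<^sub>R axis i 1) = y + w$j *\<^sub>R axis j 1"
    using insert.hyps by (simp add: y_def algebra_simps)
  then show ?case
    using insert step by (simp add: y_def algebra_simps)
qed

lemma pdir_continuous_has_derivative:
  fixes f :: "real^'n::finite \<Rightarrow> real"
  assumes ex: "\<And>i y. pdir_exists i f y" and cont: "\<And>i. continuous_on UNIV (pdir i f)"
  shows "(f has_derivative (\<lambda>w. grad f x \<bullet> w)) (at x)"
  unfolding has_derivative_at_alt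
proof (intro conjI allI impI)
  show "bounded_linear (\<lambda>w. grad f x \<bullet> w)" by (rule bounded_linear_inner_right)
next
  fix e :: real assume "e > 0"
  define e' where "e' = e / CARD('n)"
  have "e' > 0" using \<open>e > 0\<close> by (simp add: e'_def)
  have "\<forall>\<^sub>F y in at x. \<forall>i. dist (pdir i f y) (pdir i f x) < e'"
    using cont \<open>e' > 0\<close>
    by (intro eventually_all_finite allI tendstoD) (simp_all add: continuous_on_eq_continuous_at isCont_def)
  then obtain \<delta> where "\<delta> > 0" and \<delta>: "\<And>y i. y \<noteq> x \<Longrightarrow> dist y x < \<delta> \<Longrightarrow> dist (pdir i f y) (pdir i f x) < e'"
    by (auto simp: eventually_at)
  show "\<exists>d>0. \<forall>y. norm (y - x) < d \<longrightarrow> norm (f y - f x - grad f x \<bullet> (y - x)) \<le> e * norm (y - x)"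
  proof (intro exI conjI allI impI)
    fix y assume "norm (y - x) < \<delta>"
    then have "\<bar>pdir i f z - pdir i f x\<bar> \<le> e'" if "norm (z - x) \<le> norm (y - x)" for i z
      using \<delta>[of z i] that \<open>e' > 0\<close> by (cases "z = x") (auto simp: dist_norm dist_real_def)
    from pdir_axis_sum_estimate[where S=UNIV and w="y - x", OF ex this]
    have "\<bar>f y - f x - (\<Sum>i\<in>UNIV. (y - x)$i * pdir i f x)\<bar> \<le> e' * CARD('n) * norm (y - x)"
      by (simp only: sum_axis_UNIV) simp
    then show "norm (f y - f x - grad f x \<bullet> (y - x)) \<le> e * norm (y - x)"
      by (simp add: e'_def inner_vec_def grad_def mult.commute)
  qed fact
qed

lemma smooth_fnD:
  assumes "smooth_fn f"
  shows "continuous_on UNIV f" "pdir_exists i f y" "continuous_on UNIV (pdir i f)"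
    "pdir_exists j (pdir i f) y" "continuous_on UNIV (lap f)"
proof -
  have iter: "continuous_on UNIV (iter_pd ds f)" "pdir_exists j (iter_pd ds f) y" for ds j y
    using assms unfolding smooth_fn_def by auto
  show "continuous_on UNIV f" "pdir_exists i f y" using iter[where ds="[]"] by simp_all
  show "continuous_on UNIV (pdir i f)" "pdir_exists j (pdir i f) y" using iter[where ds="[i]"] by simp_all
  have "continuous_on UNIV (\<lambda>x. \<Sum>i\<in>UNIV. pdir i (pdir i f) x)"
    using iter(1)[where ds="[_, _]"] by (intro continuous_on_sum) simp
  then show "continuous_on UNIV (lap f)" by (simp add: lap_def[abs_def])
qed

section \<open>Minima in space and time\<close>

lemma DERIV_second_nonneg_at_local_min:
  fixes G G' :: "real \<Rightarrow> real"
  assumes "d > 0" and min: "\<And>s. \<bar>s\<bar> < d \<Longrightarrow> G 0 \<le> G s"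
    and G': "\<And>s. \<bar>s\<bar> < d \<Longrightarrow> (G has_real_derivative G' s) (at s)"
    and G'': "(G' has_real_derivative D) (at 0)"
  shows "D \<ge> 0"
proof (rule ccontr)
  assume "\<not> D \<ge> 0"
  have "G' 0 = 0"
    using DERIV_local_min[OF G'[of 0] \<open>d > 0\<close>] min \<open>d > 0\<close> by (simp add: abs_minus_commute)
  moreover obtain e where "e > 0" and dec: "\<And>h. h > 0 \<Longrightarrow> h < e \<Longrightarrow> G' (0 + h) < G' 0"
    using DERIV_neg_dec_right[OF G''] \<open>\<not> D \<ge> 0\<close> by auto
  define s where "s = min e d / 2"
  have s: "0 < s" "s < e" "s < d" using \<open>e > 0\<close> \<open>d > 0\<close> by (auto simp: s_def)
  obtain z where z: "0 < z" "z < s" "G s - G 0 = s * G' z"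
    using MVT2[of 0 s G G'] s G' by force
  ultimately have "G' z < 0" using dec[of z] s by simp
  then have "s * G' z < 0" using \<open>0 < s\<close> by (simp add: mult_pos_neg)
  then have "G s < G 0" using z(3) by simp
  with min[of s] s show False by simp
qed

lemma second_directional_derivative_nonneg_at_min:
  fixes F F' :: "'a::real_normed_vector \<Rightarrow> real"
  assumes "open U" "x \<in> U" and min: "\<And>y. y \<in> U \<Longrightarrow> F x \<le> F y"
    and F': "\<And>y. y \<in> U \<Longrightarrow> ((\<lambda>s. F (y + s *\<^sub>R e)) has_real_derivative F' y) (at 0)"
    and F'': "((\<lambda>s. F' (x + s *\<^sub>R e)) has_real_derivative D) (at 0)"
  shows "D \<ge> 0"
proof (cases "e = 0")
  case True
  then have "((\<lambda>s. F' x) has_real_derivative D) (at 0)" using F'' by simp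
  then show ?thesis using DERIV_unique[OF _ DERIV_const] by fastforce
next
  case False
  obtain r where "r > 0" "ball x r \<subseteq> U" using assms openE by blast
  define d where "d = r / norm e"
  have "d > 0" using \<open>r > 0\<close> False by (simp add: d_def)
  have line: "x + s *\<^sub>R e \<in> U" if "\<bar>s\<bar> < d" for s
  proof -
    have "norm (s *\<^sub>R e) < r" using that False by (simp add: d_def pos_less_divide_eq)
    then show ?thesis using \<open>ball x r \<subseteq> U\<close> by (auto simp: dist_norm)
  qed
  show ?thesis
  proof (rule DERIV_second_nonneg_at_local_min[OF \<open>d > 0\<close>, of "\<lambda>s. F (x + s *\<^sub>R e)" "\<lambda>s. F' (x + s *\<^sub>R e)"])
    fix s :: real assume "\<bar>s\<bar> < d"
    then show "F (x + 0 *\<^sub>R e) \<le> F (x + s *\<^sub>R e)" using min line by simp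
    have "(\<lambda>r. F ((x + s *\<^sub>R e) + r *\<^sub>R e)) = (\<lambda>r. F (x + (r + s) *\<^sub>R e))"
      by (simp add: algebra_simps)
    then show "((\<lambda>s. F (x + s *\<^sub>R e)) has_real_derivative F' (x + s *\<^sub>R e)) (at s)"
      using F'[OF line[OF \<open>\<bar>s\<bar> < d\<close>]] DERIV_shift[of "\<lambda>s. F (x + s *\<^sub>R e)" _ 0 s] by simp
  qed (rule F'')
qed

lemma lap_nonneg_at_interior_min:
  fixes f g h :: "real^'n::finite \<Rightarrow> real"
  assumes "open U" "x \<in> U"
    and min: "\<And>y. y \<in> U \<Longrightarrow> f x - g x + \<kappa> * h x \<le> f y - g y + \<kappa> * h y"
    and first: "\<And>i y. y \<in> U \<Longrightarrow> pdir_exists i f y \<and> pdir_exists i g y \<and> pdir_exists i h y"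
    and second: "\<And>i. pdir_exists i (pdir i f) x \<and> pdir_exists i (pdir i g) x \<and> pdir_exists i (pdir i h) x"
  shows "lap f x - lap g x + \<kappa> * lap h x \<ge> 0"
proof -
  have axis_deriv: "((\<lambda>s. F (z + s *\<^sub>R axis i 1)) has_real_derivative pdir i F z) (at 0)"
    if "pdir_exists i F z" for i and F :: "real^'n \<Rightarrow> real" and z
    using pdir_has_real_derivative_along_axis[of i F z 0] that by simp
  have "0 \<le> pdir i (pdir i f) x - pdir i (pdir i g) x + \<kappa> * pdir i (pdir i h) x" for i
  proof (rule second_directional_derivative_nonneg_at_min[OF assms(1,2),
        where F="\<lambda>y. f y - g y + \<kappa> * h y" and F'="\<lambda>y. pdir i f y - pdir i g y + \<kappa> * pdir i h y"
        and e="axis i 1"])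
    fix y assume "y \<in> U"
    then show "f x - g x + \<kappa> * h x \<le> f y - g y + \<kappa> * h y" by (rule min)
    have "((\<lambda>s. f (y + s *\<^sub>R axis i 1)) has_real_derivative pdir i f y) (at 0)"
      "((\<lambda>s. g (y + s *\<^sub>R axis i 1)) has_real_derivative pdir i g y) (at 0)"
      "((\<lambda>s. h (y + s *\<^sub>R axis i 1)) has_real_derivative pdir i h y) (at 0)"
      using first[OF \<open>y \<in> U\<close>] axis_deriv[of i f y] axis_deriv[of i g y] axis_deriv[of i h y] by auto
    then show "((\<lambda>s. f (y + s *\<^sub>R axis i 1) - g (y + s *\<^sub>R axis i 1) + \<kappa> * h (y + s *\<^sub>R axis i 1))
        has_real_derivative pdir i f y - pdir i g y + \<kappa> * pdir i h y) (at 0)"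
      by (intro DERIV_add DERIV_diff DERIV_cmult)
  next
    have "((\<lambda>s. pdir i f (x + s *\<^sub>R axis i 1)) has_real_derivative pdir i (pdir i f) x) (at 0)"
      "((\<lambda>s. pdir i g (x + s *\<^sub>R axis i 1)) has_real_derivative pdir i (pdir i g) x) (at 0)"
      "((\<lambda>s. pdir i h (x + s *\<^sub>R axis i 1)) has_real_derivative pdir i (pdir i h) x) (at 0)"
      using second axis_deriv[of i "pdir i f" x] axis_deriv[of i "pdir i g" x] axis_deriv[of i "pdir i h" x]
      by auto
    then show "((\<lambda>s. pdir i f (x + s *\<^sub>R axis i 1) - pdir i g (x + s *\<^sub>R axis i 1) + \<kappa> * pdir i h (x + s *\<^sub>R axis i 1))
        has_real_derivative pdir i (pdir i f) x - pdir i (pdir i g) x + \<kappa> * pdir i (pdir i h) x) (at 0)"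
      by (intro DERIV_add DERIV_diff DERIV_cmult)
  qed
  then have "0 \<le> (\<Sum>i\<in>UNIV. pdir i (pdir i f) x - pdir i (pdir i g) x + \<kappa> * pdir i (pdir i h) x)"
    by (simp add: sum_nonneg)
  then show ?thesis by (simp add: lap_def sum.distrib sum_subtractf sum_distrib_left)
qed

lemma DERIV_nonpos_at_first_zero:
  fixes H :: "real \<Rightarrow> real"
  assumes "(H has_real_derivative D) (at t)" "t0 < t"
    and pos: "\<And>s. t0 \<le> s \<Longrightarrow> s < t \<Longrightarrow> H s > 0" and "H t \<le> 0"
  shows "D \<le> 0"
proof (rule ccontr)
  assume "\<not> D \<le> 0"
  then obtain d where "d > 0" and inc: "\<And>h. h > 0 \<Longrightarrow> h < d \<Longrightarrow> H (t - h) < H t"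
    using DERIV_pos_inc_left[OF assms(1)] by auto
  define h where "h = min d (t - t0) / 2"
  have "h > 0" "h < d" "h \<le> t - t0" using \<open>d > 0\<close> \<open>t0 < t\<close> by (auto simp: h_def)
  then show False using inc[of h] pos[of "t - h"] \<open>H t \<le> 0\<close> by simp
qed

lemma first_zero_in_time:
  fixes F :: "'a::metric_space \<Rightarrow> real \<Rightarrow> real"
  assumes "compact X" and cont: "continuous_on (X \<times> {0..T}) (\<lambda>p. F (fst p) (snd p))"
    and init: "\<And>x. x \<in> X \<Longrightarrow> F x 0 > 0"
    and "x0 \<in> X" "t0 \<in> {0..T}" "F x0 t0 \<le> 0"
  obtains xs ts where "xs \<in> X" "0 < ts" "ts \<le> T" "F xs ts = 0"
    "\<And>x t. x \<in> X \<Longrightarrow> 0 \<le> t \<Longrightarrow> t < ts \<Longrightarrow> F x t > 0"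
    "\<And>x. x \<in> X \<Longrightarrow> F x ts \<ge> 0"
proof -
  define S where "S = {p \<in> X \<times> {0..T}. F (fst p) (snd p) \<le> 0}"
  have "compact (X \<times> {0..T})" using \<open>compact X\<close> by (intro compact_Times) auto
  moreover have "closed S"
    unfolding S_def using compact_imp_closed[OF calculation]
    by (intro continuous_on_closed_Collect_le cont continuous_on_const)
  moreover have "S \<subseteq> X \<times> {0..T}" by (auto simp: S_def)
  ultimately have "compact S" by (metis Int_absorb1 compact_Int_closed)
  moreover have "S \<noteq> {}" using assms(4-6) by (auto simp: S_def)
  ultimately have "\<exists>p\<in>S. \<forall>q\<in>S. snd p \<le> snd q"
    by (intro continuous_attains_inf continuous_intros)
  then obtain p where "p \<in> S" and first: "\<And>q. q \<in> S \<Longrightarrow> snd p \<le> snd q" by blast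
  obtain xs ts where p: "p = (xs, ts)" by fastforce
  have "xs \<in> X" "0 \<le> ts" "ts \<le> T" "F xs ts \<le> 0" using \<open>p \<in> S\<close> by (auto simp: S_def p)
  have "ts \<noteq> 0" using init[OF \<open>xs \<in> X\<close>] \<open>F xs ts \<le> 0\<close> by auto
  have before: "F x t > 0" if "x \<in> X" "0 \<le> t" "t < ts" for x t
    using first[of "(x, t)"] that \<open>ts \<le> T\<close> by (force simp: S_def p)
  have at: "F x ts \<ge> 0" if "x \<in> X" for x
  proof (rule continuous_ge_on_closure[where S="{0..<ts}" and f="F x"])
    have "continuous_on {0..ts} (\<lambda>t. (\<lambda>p. F (fst p) (snd p)) (x, t))"
      using \<open>ts \<le> T\<close> that
      by (intro continuous_on_compose2[OF cont] continuous_intros) auto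
    then show "continuous_on (closure {0..<ts}) (F x)"
      using \<open>0 \<le> ts\<close> \<open>ts \<noteq> 0\<close> by simp
  qed (use \<open>0 \<le> ts\<close> \<open>ts \<noteq> 0\<close> before[OF that] in \<open>auto intro: less_imp_le\<close>)
  show thesis
    using that[OF \<open>xs \<in> X\<close> _ \<open>ts \<le> T\<close> _ before at] \<open>0 \<le> ts\<close> \<open>ts \<noteq> 0\<close> \<open>F xs ts \<le> 0\<close> at[OF \<open>xs \<in> X\<close>]
    by simp
qed

lemma inner_outward_normal:
  "grad \<phi> x \<bullet> outward_normal \<phi> x = norm (grad \<phi> x)"
  by (cases "grad \<phi> x = 0") (simp_all add: outward_normal_def dot_square_norm power2_eq_square)

lemma defining_function_inward_derivative:
  fixes \<phi> :: "real^'n::finite \<Rightarrow> real"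
  assumes "\<And>i y. pdir_exists i \<phi> y" "\<And>i. continuous_on UNIV (pdir i \<phi>)"
  shows "((\<lambda>s. \<phi> (x - s *\<^sub>R outward_normal \<phi> x)) has_real_derivative - norm (grad \<phi> x)) (at 0)"
proof -
  define \<gamma> where "\<gamma> s = x - s *\<^sub>R outward_normal \<phi> x" for s :: real
  have "(\<gamma> has_derivative (\<lambda>s. - s *\<^sub>R outward_normal \<phi> x)) (at 0)"
    unfolding \<gamma>_def by (auto intro!: derivative_eq_intros)
  moreover have "\<gamma> 0 = x" by (simp add: \<gamma>_def)
  ultimately have "((\<lambda>s. \<phi> (\<gamma> s)) has_derivative (\<lambda>s. grad \<phi> x \<bullet> (- s *\<^sub>R outward_normal \<phi> x))) (at 0)"
    using has_derivative_compose pdir_continuous_has_derivative[OF assms] by metis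
  moreover have "(\<lambda>s. grad \<phi> x \<bullet> (- s *\<^sub>R outward_normal \<phi> x)) = (*) (- norm (grad \<phi> x))"
    by (simp add: fun_eq_iff inner_outward_normal)
  ultimately show ?thesis by (simp only: has_field_derivative_def \<gamma>_def)
qed

lemma neumann_excludes_boundary_min:
  fixes \<phi> w :: "real^'n::finite \<Rightarrow> real"
  assumes \<Omega>: "\<Omega> = {x. \<phi> x < 0}" and "\<phi> xs = 0" "grad \<phi> xs \<noteq> 0"
    and \<phi>_C1: "\<And>i y. pdir_exists i \<phi> y" "\<And>i. continuous_on UNIV (pdir i \<phi>)"
    and w: "(w has_derivative D) (at xs within closure \<Omega>)" "D (outward_normal \<phi> xs) = 0"
    and "\<kappa> > 0"
    and min: "\<And>y. y \<in> closure \<Omega> \<Longrightarrow> w xs + \<kappa> * \<phi> xs \<le> w y + \<kappa> * \<phi> y"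
  shows False
proof -
  define \<nu> where "\<nu> = outward_normal \<phi> xs"
  define \<gamma> where "\<gamma> s = xs - s *\<^sub>R \<nu>" for s :: real
  define S where "S = {s. \<gamma> s \<in> closure \<Omega>}"
  have \<gamma>: "(\<gamma> has_derivative (\<lambda>s. - s *\<^sub>R \<nu>)) (at 0 within S)"
    unfolding \<gamma>_def by (auto intro!: derivative_eq_intros)
  have "\<gamma> 0 = xs" by (simp add: \<gamma>_def)
  have \<phi>\<gamma>: "((\<lambda>s. \<phi> (\<gamma> s)) has_real_derivative - norm (grad \<phi> xs)) (at 0)"
    using defining_function_inward_derivative[OF \<phi>_C1] by (simp add: \<gamma>_def \<nu>_def)
  obtain d1 where "d1 > 0" and inside: "\<And>s. s > 0 \<Longrightarrow> s < d1 \<Longrightarrow> \<gamma> s \<in> closure \<Omega>"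
    using DERIV_neg_dec_right[OF \<phi>\<gamma>] \<open>grad \<phi> xs \<noteq> 0\<close> \<open>\<phi> xs = 0\<close> closure_subset
    by (force simp: \<Omega> \<gamma>_def)
  have "\<gamma> ` S \<subseteq> closure \<Omega>" by (auto simp: S_def)
  then have "(w has_derivative D) (at (\<gamma> 0) within \<gamma> ` S)"
    using has_derivative_subset[OF w(1)] \<open>\<gamma> 0 = xs\<close> by simp
  then have "((\<lambda>s. w (\<gamma> s)) has_derivative (\<lambda>s. D (- s *\<^sub>R \<nu>))) (at 0 within S)"
    using diff_chain_within[OF \<gamma>] by (simp add: o_def)
  moreover have "bounded_linear D" using w(1) by (rule has_derivative_bounded_linear)
  then have "(\<lambda>s. D (- s *\<^sub>R \<nu>)) = (*) 0"
    using w(2) by (simp add: fun_eq_iff linear_simps \<nu>_def)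
  ultimately have "((\<lambda>s. w (\<gamma> s)) has_real_derivative 0) (at 0 within S)"
    by (simp only: has_field_derivative_def)
  then have "((\<lambda>s. w (\<gamma> s) + \<kappa> * \<phi> (\<gamma> s)) has_real_derivative 0 + \<kappa> * - norm (grad \<phi> xs)) (at 0 within S)"
    by (intro DERIV_add DERIV_cmult has_field_derivative_at_within[OF \<phi>\<gamma>])
  then obtain d where "d > 0" and dec: "\<And>s. s > 0 \<Longrightarrow> s \<in> S \<Longrightarrow> s < d \<Longrightarrow>
      w (\<gamma> s) + \<kappa> * \<phi> (\<gamma> s) < w (\<gamma> 0) + \<kappa> * \<phi> (\<gamma> 0)"
    using has_real_derivative_neg_dec_right \<open>\<kappa> > 0\<close> \<open>grad \<phi> xs \<noteq> 0\<close> by fastforce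
  define s where "s = min d d1 / 2"
  have "s > 0" "s < d" "s < d1" using \<open>d > 0\<close> \<open>d1 > 0\<close> by (auto simp: s_def)
  then show False
    using dec[of s] inside[of s] min[of "\<gamma> s"] by (simp add: S_def \<gamma>_def)
qed

section \<open>Reaction terms\<close>

lemma prey_reaction_one_sided_bound:
  fixes b c M \<delta> u1 u2 v1 v2 :: real
  assumes "b \<ge> 0" "c \<ge> 0" "\<delta> \<ge> 0" "u2 - u1 = - \<delta>" "v1 - v2 \<ge> - \<delta>"
    and "0 \<le> u1" "u1 \<le> M" "0 \<le> u2" "0 \<le> v2"
  shows "b * u2 * (1 - u2 - c * v2) - b * u1 * (1 - u1 - c * v1) \<ge> - (b + b * c * M) * \<delta>"
proof -
  have "b * u2 * (1 - u2 - c * v2) - b * u1 * (1 - u1 - c * v1)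
      = b * (u2 - u1) * (1 - u1 - u2 - c * v2) + b * c * u1 * (v1 - v2)"
    by (simp add: algebra_simps)
  also have "\<dots> = b * \<delta> * (u1 + u2 + c * v2) - b * \<delta> + b * c * u1 * (v1 - v2)"
    unfolding assms(4) by (simp add: algebra_simps)
  finally have "b * u2 * (1 - u2 - c * v2) - b * u1 * (1 - u1 - c * v1)
      = b * \<delta> * (u1 + u2 + c * v2) - b * \<delta> + b * c * u1 * (v1 - v2)" .
  moreover have "b * \<delta> * (u1 + u2 + c * v2) \<ge> 0" using assms by simp
  moreover have "b * c * u1 * (v1 - v2) \<ge> b * c * u1 * (- \<delta>)"
    using assms by (intro mult_left_mono) auto
  moreover have "b * c * u1 * \<delta> \<le> b * c * M * \<delta>"
    using assms by (intro mult_right_mono mult_left_mono) auto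
  ultimately show ?thesis by (simp add: algebra_simps)
qed

lemma fear_response_difference:
  fixes K u1 u2 :: real
  assumes "0 \<le> K" "0 \<le> u1" "0 \<le> u2"
  shows "1 / (1 + K * u1) - 1 / (1 + K * u2) = (u2 - u1) * (K / ((1 + K * u1) * (1 + K * u2)))"
    and "0 \<le> K / ((1 + K * u1) * (1 + K * u2))"
    and "K / ((1 + K * u1) * (1 + K * u2)) \<le> K"
proof -
  have pos: "1 + K * u1 > 0" "1 + K * u2 > 0" using assms by (auto intro: add_pos_nonneg)
  then show "1 / (1 + K * u1) - 1 / (1 + K * u2) = (u2 - u1) * (K / ((1 + K * u1) * (1 + K * u2)))"
    by (simp add: field_simps)
  show "0 \<le> K / ((1 + K * u1) * (1 + K * u2))" using pos assms by simp
  have "1 \<le> (1 + K * u1) * (1 + K * u2)"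
    using assms by (simp add: algebra_simps)
  then show "K / ((1 + K * u1) * (1 + K * u2)) \<le> K"
    using assms by (simp add: divide_le_eq mult_le_cancel_left1)
qed

lemma predator_reaction_one_sided_bound:
  fixes a m K1 K2 Kmax M \<delta> u1 u2 v1 v2 :: real
  assumes "a \<ge> 0" "m \<ge> 0" "\<delta> \<ge> 0" "0 \<le> K1" "K1 \<le> K2" "K1 \<le> Kmax"
    and "v1 - v2 = - \<delta>" "u2 - u1 \<ge> - \<delta>"
    and "0 \<le> u1" "0 \<le> u2" "0 \<le> v1" "0 \<le> v2" "v2 \<le> M"
  shows "v1 * (1 / (1 + K1 * u1) - v1 - a * u1 - m * u1 * v1)
      - v2 * (1 / (1 + K2 * u2) - v2 - a * u2 - m * u2 * v2) \<ge> - (1 + M * (Kmax + a + m * M)) * \<delta>"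
proof -
  have pos: "1 + K1 * u1 > 0" "1 + K1 * u2 > 0" "1 + K2 * u2 > 0"
    using assms by (auto intro: add_pos_nonneg)
  define A where "A = 1 / (1 + K1 * u1)"
  define B where "B = 1 / (1 + K1 * u2)"
  define E where "E = 1 / (1 + K2 * u2)"
  define k where "k = K1 / ((1 + K1 * u1) * (1 + K1 * u2))"
  define R where "R = A - (v1 + v2) - a * u1 - m * u1 * (v1 + v2)"
  define S where "S = k + a + m * v2"
  note fear = fear_response_difference[of K1 u1 u2, folded A_def B_def k_def]
  have "(v1 - v2) * R + v2 * (u2 - u1) * S + v2 * (B - E)
      - (v1 * (A - v1 - a * u1 - m * u1 * v1) - v2 * (E - v2 - a * u2 - m * u2 * v2))
      = v2 * ((u2 - u1) * k - (A - B))"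
    unfolding R_def S_def by (simp add: algebra_simps)
  then have split: "v1 * (A - v1 - a * u1 - m * u1 * v1) - v2 * (E - v2 - a * u2 - m * u2 * v2)
      = (v1 - v2) * R + v2 * (u2 - u1) * S + v2 * (B - E)"
    using fear(1) assms by simp
  have "A \<le> 1" using pos assms by (simp add: A_def)
  then have "R \<le> 1" using assms unfolding R_def by (smt (verit) mult_nonneg_nonneg)
  then have "(v1 - v2) * R \<ge> - \<delta>"
    using assms(3,7) mult_left_mono[of R 1 \<delta>] by simp
  moreover have "v2 * (u2 - u1) * S \<ge> - (M * (Kmax + a + m * M)) * \<delta>"
  proof -
    have "0 \<le> k" "k \<le> K1" using fear(2,3) assms by auto
    then have "0 \<le> S" "S \<le> Kmax + a + m * M"
      using assms mult_left_mono[of v2 M m] unfolding S_def by auto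
    then have "0 \<le> v2 * S" "v2 * S \<le> M * (Kmax + a + m * M)"
      using assms by (auto intro: mult_mono)
    then have "v2 * S * (u2 - u1) \<ge> - (v2 * S * \<delta>)" "v2 * S * \<delta> \<le> M * (Kmax + a + m * M) * \<delta>"
      using assms(3,8) mult_left_mono[of "- \<delta>" "u2 - u1" "v2 * S"] mult_right_mono[of "v2 * S" _ \<delta>]
      by simp_all
    then show ?thesis by (simp add: mult.commute mult.left_commute)
  qed
  moreover have "v2 * (B - E) \<ge> 0" \<comment> \<open>the only use of \<open>K1 \<le> K2\<close>\<close>
  proof -
    have "E \<le> B"
      using pos assms mult_right_mono[of K1 K2 u2] unfolding B_def E_def
      by (intro divide_left_mono mult_pos_pos) auto
    then show ?thesis using assms by simp
  qed
  moreover have "- (1 + M * (Kmax + a + m * M)) * \<delta> = - \<delta> + - (M * (Kmax + a + m * M)) * \<delta>"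
    by (simp add: algebra_simps)
  ultimately show ?thesis unfolding A_def [symmetric] E_def [symmetric] split by linarith
qed

lemma contact_rates_incompatible:
  fixes \<kappa> h d L L\<phi> \<Lambda> R \<rho> \<theta> \<tau> :: real
  assumes "\<kappa> > 0" "h \<ge> 1" "d \<ge> 0" "L \<ge> 0" "L\<phi> \<le> L"
    and lap: "\<Lambda> + \<kappa> * L\<phi> \<ge> 0" and time: "\<tau> + \<kappa> * \<theta> * h \<le> 0" and eq: "\<tau> = d * \<Lambda> + R"
    and reaction: "R \<ge> - \<rho> * (\<kappa> * h)" and rate: "\<theta> > d * L + \<rho>"
  shows False
proof -
  have "\<kappa> * L\<phi> \<le> \<kappa> * L * h"
    using assms mult_left_mono[of L\<phi> L \<kappa>] mult_left_mono[of 1 h "\<kappa> * L"] by simp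
  then have "d * \<Lambda> \<ge> - (d * L) * (\<kappa> * h)"
    using lap \<open>d \<ge> 0\<close> mult_left_mono[of "- (\<kappa> * L * h)" \<Lambda> d] by (simp add: algebra_simps)
  moreover have "(d * L + \<rho>) * (\<kappa> * h) < \<theta> * (\<kappa> * h)"
    using assms by (intro mult_strict_right_mono) auto
  moreover have "\<theta> * (\<kappa> * h) = \<kappa> * \<theta> * h" "(d * L + \<rho>) * (\<kappa> * h) = d * L * (\<kappa> * h) + \<rho> * (\<kappa> * h)"
    "- (d * L) * (\<kappa> * h) = - (d * L * (\<kappa> * h))" "- \<rho> * (\<kappa> * h) = - (\<rho> * (\<kappa> * h))"
    by (simp_all add: algebra_simps)
  ultimately show False using time eq reaction by linarith
qed

section \<open>The comparison principle\<close>

lemma classical_neumannD: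
  assumes "classical_neumann \<Omega> \<nu> w"
  shows "continuous_on (closure \<Omega> \<times> {0..}) (\<lambda>p. w (fst p) (snd p))"
    and "x \<in> \<Omega> \<Longrightarrow> t > 0 \<Longrightarrow> ((\<lambda>s. w x s) has_real_derivative tder w x t) (at t)"
    and "x \<in> \<Omega> \<Longrightarrow> t > 0 \<Longrightarrow> pdir_exists i (\<lambda>y. w y t) x"
    and "x \<in> \<Omega> \<Longrightarrow> t > 0 \<Longrightarrow> pdir_exists j (pdir i (\<lambda>y. w y t)) x"
    and "t > 0 \<Longrightarrow> x \<in> frontier \<Omega> \<Longrightarrow>
      \<exists>D. ((\<lambda>y. w y t) has_derivative D) (at x within closure \<Omega>) \<and> D (\<nu> x) = 0"
  using assms unfolding classical_neumann_def tder_def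
  by (auto simp: DERIV_deriv_iff_real_differentiable)

lemma classical_neumann_continuous_on_slab:
  assumes "classical_neumann \<Omega> \<nu> w"
  shows "continuous_on (closure \<Omega> \<times> {0..T}) (\<lambda>p. w (fst p) (snd p))"
  by (rule continuous_on_subset[OF classical_neumannD(1)[OF assms]]) auto

lemma first_contact_conditions:
  fixes \<Omega> :: "(real^'n::finite) set" and \<phi> :: "real^'n \<Rightarrow> real"
    and w1 w2 :: "real^'n \<Rightarrow> real \<Rightarrow> real"
  assumes dom: "smooth_bdd_domain \<Omega> \<phi>"
    and cn1: "classical_neumann \<Omega> (outward_normal \<phi>) w1"
    and cn2: "classical_neumann \<Omega> (outward_normal \<phi>) w2"
    and "\<epsilon> > 0" "ts > 0" "xs \<in> closure \<Omega>"
    and before: "\<And>t. 0 \<le> t \<Longrightarrow> t < ts \<Longrightarrow> w2 xs t - w1 xs t + \<epsilon> * exp (\<theta> * t) * (C + \<phi> xs) > 0"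
    and touch: "\<And>x. x \<in> closure \<Omega> \<Longrightarrow> w2 x ts - w1 x ts + \<epsilon> * exp (\<theta> * ts) * (C + \<phi> x) \<ge> 0"
    and zero: "w2 xs ts - w1 xs ts + \<epsilon> * exp (\<theta> * ts) * (C + \<phi> xs) = 0"
  shows "xs \<in> \<Omega>"
    and "lap (\<lambda>y. w2 y ts) xs - lap (\<lambda>y. w1 y ts) xs + \<epsilon> * exp (\<theta> * ts) * lap \<phi> xs \<ge> 0"
    and "tder w2 xs ts - tder w1 xs ts + \<epsilon> * exp (\<theta> * ts) * \<theta> * (C + \<phi> xs) \<le> 0"
proof -
  have "open \<Omega>" and \<Omega>: "\<Omega> = {x. \<phi> x < 0}" and fr: "frontier \<Omega> = {x. \<phi> x = 0}"
    and grad_nonzero: "\<And>x. x \<in> frontier \<Omega> \<Longrightarrow> grad \<phi> x \<noteq> 0" and "smooth_fn \<phi>"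
    using dom unfolding smooth_bdd_domain_def by auto
  define \<kappa> where "\<kappa> = \<epsilon> * exp (\<theta> * ts)"
  have "\<kappa> > 0" using \<open>\<epsilon> > 0\<close> by (simp add: \<kappa>_def)
  have min: "w2 xs ts - w1 xs ts + \<kappa> * \<phi> xs \<le> w2 y ts - w1 y ts + \<kappa> * \<phi> y" if "y \<in> closure \<Omega>" for y
    using touch[OF that] zero unfolding \<kappa>_def by (simp add: algebra_simps)
  show "xs \<in> \<Omega>"
  proof (rule ccontr)
    assume "xs \<notin> \<Omega>"
    then have "xs \<in> frontier \<Omega>"
      using \<open>xs \<in> closure \<Omega>\<close> \<open>open \<Omega>\<close> by (simp add: frontier_def interior_open)
    obtain D1 where D1: "((\<lambda>y. w1 y ts) has_derivative D1) (at xs within closure \<Omega>)" "D1 (outward_normal \<phi> xs) = 0"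
      using classical_neumannD(5)[OF cn1 \<open>ts > 0\<close> \<open>xs \<in> frontier \<Omega>\<close>] by blast
    obtain D2 where D2: "((\<lambda>y. w2 y ts) has_derivative D2) (at xs within closure \<Omega>)" "D2 (outward_normal \<phi> xs) = 0"
      using classical_neumannD(5)[OF cn2 \<open>ts > 0\<close> \<open>xs \<in> frontier \<Omega>\<close>] by blast
    show False
      by (rule neumann_excludes_boundary_min[OF \<Omega> _ grad_nonzero[OF \<open>xs \<in> frontier \<Omega>\<close>]
            smooth_fnD(2,3)[OF \<open>smooth_fn \<phi>\<close>] has_derivative_diff[OF D2(1) D1(1)] _ \<open>\<kappa> > 0\<close> min])
        (use fr \<open>xs \<in> frontier \<Omega>\<close> D1(2) D2(2) in auto)
  qed
  have "lap (\<lambda>y. w2 y ts) xs - lap (\<lambda>y. w1 y ts) xs + \<kappa> * lap \<phi> xs \<ge> 0"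
    using closure_subset min classical_neumannD(3,4)[OF cn1 _ \<open>ts > 0\<close>] classical_neumannD(3,4)[OF cn2 _ \<open>ts > 0\<close>]
      smooth_fnD(2,4)[OF \<open>smooth_fn \<phi>\<close>] \<open>xs \<in> \<Omega>\<close>
    by (intro lap_nonneg_at_interior_min[OF \<open>open \<Omega>\<close> \<open>xs \<in> \<Omega>\<close>]) auto
  then show "lap (\<lambda>y. w2 y ts) xs - lap (\<lambda>y. w1 y ts) xs + \<epsilon> * exp (\<theta> * ts) * lap \<phi> xs \<ge> 0"
    by (simp add: \<kappa>_def)
  have "((\<lambda>t. exp (\<theta> * t)) has_real_derivative exp (\<theta> * ts) * \<theta>) (at ts)"
    by (auto intro!: derivative_eq_intros)
  then have "((\<lambda>t. w2 xs t - w1 xs t + \<epsilon> * exp (\<theta> * t) * (C + \<phi> xs)) has_real_derivative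
      tder w2 xs ts - tder w1 xs ts + \<epsilon> * (exp (\<theta> * ts) * \<theta>) * (C + \<phi> xs)) (at ts)"
    using classical_neumannD(2)[OF cn1 \<open>xs \<in> \<Omega>\<close> \<open>ts > 0\<close>] classical_neumannD(2)[OF cn2 \<open>xs \<in> \<Omega>\<close> \<open>ts > 0\<close>]
    by (intro DERIV_add DERIV_diff DERIV_cmult_right DERIV_cmult)
  from DERIV_nonpos_at_first_zero[OF this \<open>ts > 0\<close> before] zero
  show "tder w2 xs ts - tder w1 xs ts + \<epsilon> * exp (\<theta> * ts) * \<theta> * (C + \<phi> xs) \<le> 0"
    by (simp add: mult.assoc)
qed

locale fear_comparison =
  fixes \<Omega> :: "(real^'n::finite) set" and \<phi> :: "real^'n \<Rightarrow> real"
    and a b c m d1 d2 Kmax u0 v0 :: real and Ka Kb :: "real^'n \<Rightarrow> real"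
    and u1 v1 u2 v2 :: "real^'n \<Rightarrow> real \<Rightarrow> real"
  assumes dom: "smooth_bdd_domain \<Omega> \<phi>"
    and coeffs: "a \<ge> 0" "b \<ge> 0" "c \<ge> 0" "m \<ge> 0" "d1 \<ge> 0" "d2 \<ge> 0"
    and fear_le: "\<And>x. x \<in> \<Omega> \<Longrightarrow> 0 \<le> Ka x \<and> Ka x \<le> Kb x \<and> Ka x \<le> Kmax"
    and sol1: "fear_solution \<Omega> (outward_normal \<phi>) a b c m d1 d2 Ka u0 v0 u1 v1"
    and sol2: "fear_solution \<Omega> (outward_normal \<phi>) a b c m d1 d2 Kb u0 v0 u2 v2"
begin

lemma neumann:
  "classical_neumann \<Omega> (outward_normal \<phi>) u1" "classical_neumann \<Omega> (outward_normal \<phi>) v1"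
  "classical_neumann \<Omega> (outward_normal \<phi>) u2" "classical_neumann \<Omega> (outward_normal \<phi>) v2"
  using sol1 sol2 unfolding fear_solution_def by auto

lemma nonneg:
  "x \<in> closure \<Omega> \<Longrightarrow> t \<ge> 0 \<Longrightarrow> 0 \<le> u1 x t \<and> 0 \<le> v1 x t \<and> 0 \<le> u2 x t \<and> 0 \<le> v2 x t"
  using sol1 sol2 unfolding fear_solution_def by auto

lemma initial:
  "x \<in> closure \<Omega> \<Longrightarrow> u1 x 0 = u0 \<and> v1 x 0 = v0 \<and> u2 x 0 = u0 \<and> v2 x 0 = v0"
  using sol1 sol2 unfolding fear_solution_def by auto

lemma equations:
  assumes "x \<in> \<Omega>" "t > 0"
  shows "tder u2 x t - tder u1 x t = d1 * (lap (\<lambda>y. u2 y t) x - lap (\<lambda>y. u1 y t) x)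
      + (b * u2 x t * (1 - u2 x t - c * v2 x t) - b * u1 x t * (1 - u1 x t - c * v1 x t))"
    and "tder v1 x t - tder v2 x t = d2 * (lap (\<lambda>y. v1 y t) x - lap (\<lambda>y. v2 y t) x)
      + (v1 x t * (1 / (1 + Ka x * u1 x t) - v1 x t - a * u1 x t - m * u1 x t * v1 x t)
        - v2 x t * (1 / (1 + Kb x * u2 x t) - v2 x t - a * u2 x t - m * u2 x t * v2 x t))"
  using sol1 sol2 assms unfolding fear_solution_def by (simp_all add: right_diff_distrib)

lemma prey_contact_impossible:
  assumes "L \<ge> 0" "\<And>x. x \<in> \<Omega> \<Longrightarrow> lap \<phi> x \<le> L" "u1 xs ts \<le> M" "C + \<phi> xs \<ge> 1"
    and rate: "\<theta> > d1 * L + (b + b * c * M)"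
    and "\<epsilon> > 0" "ts > 0" "xs \<in> closure \<Omega>"
    and before: "\<And>t. 0 \<le> t \<Longrightarrow> t < ts \<Longrightarrow> u2 xs t - u1 xs t + \<epsilon> * exp (\<theta> * t) * (C + \<phi> xs) > 0"
    and touch: "\<And>x. x \<in> closure \<Omega> \<Longrightarrow> u2 x ts - u1 x ts + \<epsilon> * exp (\<theta> * ts) * (C + \<phi> x) \<ge> 0"
    and zero: "u2 xs ts - u1 xs ts + \<epsilon> * exp (\<theta> * ts) * (C + \<phi> xs) = 0"
    and other: "v1 xs ts - v2 xs ts + \<epsilon> * exp (\<theta> * ts) * (C + \<phi> xs) \<ge> 0"
  shows False
proof -
  note contact = first_contact_conditions[OF dom neumann(1,3) \<open>\<epsilon> > 0\<close> \<open>ts > 0\<close> \<open>xs \<in> closure \<Omega>\<close> before touch zero]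
  define \<kappa> where "\<kappa> = \<epsilon> * exp (\<theta> * ts)"
  have "\<kappa> > 0" using \<open>\<epsilon> > 0\<close> by (simp add: \<kappa>_def)
  have "u2 xs ts - u1 xs ts = - (\<kappa> * (C + \<phi> xs))" "v1 xs ts - v2 xs ts \<ge> - (\<kappa> * (C + \<phi> xs))"
    using zero other unfolding \<kappa>_def by linarith+
  moreover have "\<kappa> * (C + \<phi> xs) \<ge> 0" using \<open>\<kappa> > 0\<close> \<open>C + \<phi> xs \<ge> 1\<close> by simp
  ultimately have "b * u2 xs ts * (1 - u2 xs ts - c * v2 xs ts) - b * u1 xs ts * (1 - u1 xs ts - c * v1 xs ts)
      \<ge> - (b + b * c * M) * (\<kappa> * (C + \<phi> xs))"
    using coeffs nonneg[OF \<open>xs \<in> closure \<Omega>\<close>, of ts] \<open>ts > 0\<close> \<open>u1 xs ts \<le> M\<close>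
    by (intro prey_reaction_one_sided_bound) auto
  then show False
    using contact assms(1,2,4) rate equations(1)[OF contact(1) \<open>ts > 0\<close>] coeffs \<open>\<kappa> > 0\<close>
    by (intro contact_rates_incompatible[of \<kappa> "C + \<phi> xs" d1 L "lap \<phi> xs"]) (auto simp: \<kappa>_def)
qed

lemma predator_contact_impossible:
  assumes "L \<ge> 0" "\<And>x. x \<in> \<Omega> \<Longrightarrow> lap \<phi> x \<le> L" "v2 xs ts \<le> M" "C + \<phi> xs \<ge> 1"
    and rate: "\<theta> > d2 * L + (1 + M * (Kmax + a + m * M))"
    and "\<epsilon> > 0" "ts > 0" "xs \<in> closure \<Omega>"
    and before: "\<And>t. 0 \<le> t \<Longrightarrow> t < ts \<Longrightarrow> v1 xs t - v2 xs t + \<epsilon> * exp (\<theta> * t) * (C + \<phi> xs) > 0"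
    and touch: "\<And>x. x \<in> closure \<Omega> \<Longrightarrow> v1 x ts - v2 x ts + \<epsilon> * exp (\<theta> * ts) * (C + \<phi> x) \<ge> 0"
    and zero: "v1 xs ts - v2 xs ts + \<epsilon> * exp (\<theta> * ts) * (C + \<phi> xs) = 0"
    and other: "u2 xs ts - u1 xs ts + \<epsilon> * exp (\<theta> * ts) * (C + \<phi> xs) \<ge> 0"
  shows False
proof -
  note contact = first_contact_conditions[OF dom neumann(4,2) \<open>\<epsilon> > 0\<close> \<open>ts > 0\<close> \<open>xs \<in> closure \<Omega>\<close> before touch zero]
  define \<kappa> where "\<kappa> = \<epsilon> * exp (\<theta> * ts)"
  have "\<kappa> > 0" using \<open>\<epsilon> > 0\<close> by (simp add: \<kappa>_def)
  have "v1 xs ts - v2 xs ts = - (\<kappa> * (C + \<phi> xs))" "u2 xs ts - u1 xs ts \<ge> - (\<kappa> * (C + \<phi> xs))"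
    using zero other unfolding \<kappa>_def by linarith+
  moreover have "\<kappa> * (C + \<phi> xs) \<ge> 0" using \<open>\<kappa> > 0\<close> \<open>C + \<phi> xs \<ge> 1\<close> by simp
  ultimately have "v1 xs ts * (1 / (1 + Ka xs * u1 xs ts) - v1 xs ts - a * u1 xs ts - m * u1 xs ts * v1 xs ts)
      - v2 xs ts * (1 / (1 + Kb xs * u2 xs ts) - v2 xs ts - a * u2 xs ts - m * u2 xs ts * v2 xs ts)
      \<ge> - (1 + M * (Kmax + a + m * M)) * (\<kappa> * (C + \<phi> xs))"
    using coeffs fear_le[OF contact(1)] nonneg[OF \<open>xs \<in> closure \<Omega>\<close>, of ts] \<open>ts > 0\<close> \<open>v2 xs ts \<le> M\<close>
    by (intro predator_reaction_one_sided_bound) auto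
  then show False
    using contact assms(1,2,4) rate equations(2)[OF contact(1) \<open>ts > 0\<close>] coeffs \<open>\<kappa> > 0\<close>
    by (intro contact_rates_incompatible[of \<kappa> "C + \<phi> xs" d2 L "lap \<phi> xs"]) (auto simp: \<kappa>_def)
qed

lemma perturbed_order:
  assumes M: "\<And>x t. x \<in> closure \<Omega> \<Longrightarrow> 0 \<le> t \<Longrightarrow> t \<le> T \<Longrightarrow> u1 x t \<le> M \<and> v2 x t \<le> M"
    and L: "L \<ge> 0" "\<And>x. x \<in> \<Omega> \<Longrightarrow> lap \<phi> x \<le> L"
    and C: "\<And>x. x \<in> closure \<Omega> \<Longrightarrow> C + \<phi> x \<ge> 1"
    and rate: "\<theta> > d1 * L + (b + b * c * M)" "\<theta> > d2 * L + (1 + M * (Kmax + a + m * M))"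
    and "\<epsilon> > 0" "x \<in> closure \<Omega>" "t \<in> {0..T}"
  shows "u2 x t - u1 x t + \<epsilon> * exp (\<theta> * t) * (C + \<phi> x) > 0 \<and> v1 x t - v2 x t + \<epsilon> * exp (\<theta> * t) * (C + \<phi> x) > 0"
proof (rule ccontr)
  define F where "F y s = min (u2 y s - u1 y s + \<epsilon> * exp (\<theta> * s) * (C + \<phi> y))
    (v1 y s - v2 y s + \<epsilon> * exp (\<theta> * s) * (C + \<phi> y))" for y s
  assume "\<not> ?thesis"
  then have "F x t \<le> 0" by (auto simp: F_def)
  have "smooth_fn \<phi>" "bounded \<Omega>" using dom unfolding smooth_bdd_domain_def by auto
  then have "compact (closure \<Omega>)" by simp
  have "continuous_on (closure \<Omega> \<times> {0..T}) (\<lambda>p. \<phi> (fst p))"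
    by (rule continuous_on_compose2[OF smooth_fnD(1)[OF \<open>smooth_fn \<phi>\<close>] continuous_on_fst[OF continuous_on_id]])
      simp
  then have cont: "continuous_on (closure \<Omega> \<times> {0..T}) (\<lambda>p. F (fst p) (snd p))"
    unfolding F_def using classical_neumann_continuous_on_slab[OF neumann(1)] classical_neumann_continuous_on_slab[OF neumann(2)]
      classical_neumann_continuous_on_slab[OF neumann(3)] classical_neumann_continuous_on_slab[OF neumann(4)]
    by (intro continuous_intros)
  have init: "F y 0 > 0" if "y \<in> closure \<Omega>" for y
    using initial[OF that] C[OF that] \<open>\<epsilon> > 0\<close> by (simp add: F_def)
  obtain xs ts where "xs \<in> closure \<Omega>" "0 < ts" "ts \<le> T" "F xs ts = 0"
    and before: "\<And>y s. y \<in> closure \<Omega> \<Longrightarrow> 0 \<le> s \<Longrightarrow> s < ts \<Longrightarrow> F y s > 0"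
    and touch: "\<And>y. y \<in> closure \<Omega> \<Longrightarrow> F y ts \<ge> 0"
    using first_zero_in_time[where F=F, OF \<open>compact (closure \<Omega>)\<close> cont init \<open>x \<in> closure \<Omega>\<close> \<open>t \<in> {0..T}\<close> \<open>F x t \<le> 0\<close>]
    by blast
  have bounds: "u1 xs ts \<le> M" "v2 xs ts \<le> M" "C + \<phi> xs \<ge> 1"
    using M[OF \<open>xs \<in> closure \<Omega>\<close> _ \<open>ts \<le> T\<close>] C[OF \<open>xs \<in> closure \<Omega>\<close>] \<open>0 < ts\<close> by auto
  consider "u2 xs ts - u1 xs ts + \<epsilon> * exp (\<theta> * ts) * (C + \<phi> xs) = 0"
    | "v1 xs ts - v2 xs ts + \<epsilon> * exp (\<theta> * ts) * (C + \<phi> xs) = 0"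
    using \<open>F xs ts = 0\<close> unfolding F_def by linarith
  then show False
  proof cases
    case 1
    show False
      by (rule prey_contact_impossible[OF L bounds(1,3) rate(1) \<open>\<epsilon> > 0\<close> \<open>0 < ts\<close> \<open>xs \<in> closure \<Omega>\<close> _ _ 1])
        (use before[OF \<open>xs \<in> closure \<Omega>\<close>] touch \<open>xs \<in> closure \<Omega>\<close> in \<open>auto simp: F_def\<close>)
  next
    case 2
    show False
      by (rule predator_contact_impossible[OF L bounds(2,3) rate(2) \<open>\<epsilon> > 0\<close> \<open>0 < ts\<close> \<open>xs \<in> closure \<Omega>\<close> _ _ 2])
        (use before[OF \<open>xs \<in> closure \<Omega>\<close>] touch \<open>xs \<in> closure \<Omega>\<close> in \<open>auto simp: F_def\<close>)
  qed
qed

lemma ordered_solutions: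
  assumes "x \<in> closure \<Omega>" "t \<ge> 0"
  shows "u1 x t \<le> u2 x t" "v2 x t \<le> v1 x t"
proof -
  have "smooth_fn \<phi>" "bounded \<Omega>" using dom unfolding smooth_bdd_domain_def by auto
  then have "compact (closure \<Omega>)" by simp
  have "compact (closure \<Omega> \<times> {0..t})" using \<open>compact (closure \<Omega>)\<close> by (intro compact_Times) auto
  moreover have "continuous_on (closure \<Omega> \<times> {0..t}) (\<lambda>p. max (u1 (fst p) (snd p)) (v2 (fst p) (snd p)))"
    using classical_neumann_continuous_on_slab[OF neumann(1)] classical_neumann_continuous_on_slab[OF neumann(4)]
    by (intro continuous_intros)
  ultimately obtain M where "M \<ge> 0" and M: "\<And>p. p \<in> closure \<Omega> \<times> {0..t} \<Longrightarrow>
      norm (max (u1 (fst p) (snd p)) (v2 (fst p) (snd p))) \<le> M"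
    by (rule continuous_on_compact_bound) auto
  obtain L where "L \<ge> 0" and L: "\<And>y. y \<in> closure \<Omega> \<Longrightarrow> norm (lap \<phi> y) \<le> L"
    using continuous_on_compact_bound[OF \<open>compact (closure \<Omega>)\<close>] continuous_on_subset[OF smooth_fnD(5)[OF \<open>smooth_fn \<phi>\<close>]]
    by blast
  obtain B where B: "\<And>y. y \<in> closure \<Omega> \<Longrightarrow> norm (\<phi> y) \<le> B"
    using continuous_on_compact_bound[OF \<open>compact (closure \<Omega>)\<close>] continuous_on_subset[OF smooth_fnD(1)[OF \<open>smooth_fn \<phi>\<close>]]
    by blast
  define \<theta> where "\<theta> = max (d1 * L + (b + b * c * M)) (d2 * L + (1 + M * (Kmax + a + m * M))) + 1"
  have rate: "\<theta> > d1 * L + (b + b * c * M)" "\<theta> > d2 * L + (1 + M * (Kmax + a + m * M))"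
    unfolding \<theta>_def by linarith+
  have M': "u1 y s \<le> M \<and> v2 y s \<le> M" if "y \<in> closure \<Omega>" "0 \<le> s" "s \<le> t" for y s
    using M[of "(y, s)"] that by auto
  have L': "lap \<phi> y \<le> L" if "y \<in> \<Omega>" for y
    using L[of y] closure_subset[of \<Omega>] that by (auto simp: abs_le_iff)
  have B': "B + 1 + \<phi> y \<ge> 1" if "y \<in> closure \<Omega>" for y
    using B[OF that] by auto
  define H where "H = exp (\<theta> * t) * (B + 1 + \<phi> x)"
  have "H > 0" using B'[OF \<open>x \<in> closure \<Omega>\<close>] by (simp add: H_def)
  have perturbed: "u2 x t - u1 x t + \<epsilon> * H > 0 \<and> v1 x t - v2 x t + \<epsilon> * H > 0" if "\<epsilon> > 0" for \<epsilon>
    using perturbed_order[OF M' \<open>L \<ge> 0\<close> L' B' rate that \<open>x \<in> closure \<Omega>\<close>] \<open>t \<ge> 0\<close>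
    by (simp add: H_def mult.assoc)
  have "u1 x t \<le> u2 x t + e" "v2 x t \<le> v1 x t + e" if "e > 0" for e
    using perturbed[of "e / H"] \<open>H > 0\<close> that by simp_all
  then show "u1 x t \<le> u2 x t" "v2 x t \<le> v1 x t" by (auto intro: field_le_epsilon)
qed

end

theorem theorem13:
  fixes \<Omega> :: "(real^'n::finite) set" and \<phi> :: "real^'n \<Rightarrow> real" and k :: "real^'n \<Rightarrow> real"
    and a b c m d1 d2 u0 v0 :: real
    and u v uh vh ut vt :: "real^'n \<Rightarrow> real \<Rightarrow> real"
  assumes dom: "smooth_bdd_domain \<Omega> \<phi>"
    and pos: "a > 0" "b > 0" "c > 0" "m > 0" "d1 > 0" "d2 > 0"
    and k_C1: "k differentiable_on \<Omega>" "\<forall>i. continuous_on \<Omega> (pdir i k)"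
    and k_nonneg: "\<forall>x\<in>\<Omega>. k x \<ge> 0"
    and k_bdd: "bdd_above (k ` \<Omega>)"
    and k_nonvanish: "\<forall>S. S \<subseteq> \<Omega> \<longrightarrow> S \<in> sets lebesgue \<longrightarrow> emeasure lebesgue S > 0 \<longrightarrow> (\<exists>x\<in>S. k x \<noteq> 0)"
    and init: "u0 > 0" "v0 > 0"
    and sol: "fear_solution \<Omega> (outward_normal \<phi>) a b c m d1 d2 k u0 v0 u v"
    and solh: "fear_solution \<Omega> (outward_normal \<phi>) a b c m d1 d2 (\<lambda>_. Inf (k ` \<Omega>)) u0 v0 uh vh"
    and solt: "fear_solution \<Omega> (outward_normal \<phi>) a b c m d1 d2 (\<lambda>_. Sup (k ` \<Omega>)) u0 v0 ut vt"
  shows "\<forall>x\<in>\<Omega>. \<forall>t\<ge>0. vt x t \<le> v x t \<and> v x t \<le> vh x t"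
proof -
  have "\<Omega> \<noteq> {}" using dom unfolding smooth_bdd_domain_def by auto
  have "bdd_below (k ` \<Omega>)" using k_nonneg by (auto intro: bdd_belowI[of _ 0])
  then have Inf_le: "Inf (k ` \<Omega>) \<le> k x" if "x \<in> \<Omega>" for x
    using that by (auto intro: cInf_lower)
  have "0 \<le> Inf (k ` \<Omega>)" using \<open>\<Omega> \<noteq> {}\<close> k_nonneg by (auto intro: cInf_greatest)
  have le_Sup: "k x \<le> Sup (k ` \<Omega>)" if "x \<in> \<Omega>" for x
    using k_bdd that by (auto intro: cSup_upper)
  interpret lower: fear_comparison \<Omega> \<phi> a b c m d1 d2 "Inf (k ` \<Omega>)" u0 v0 "\<lambda>_. Inf (k ` \<Omega>)" k uh vh u v
    using dom pos solh sol Inf_le \<open>0 \<le> Inf (k ` \<Omega>)\<close> by unfold_locales auto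
  interpret upper: fear_comparison \<Omega> \<phi> a b c m d1 d2 "Sup (k ` \<Omega>)" u0 v0 k "\<lambda>_. Sup (k ` \<Omega>)" u v ut vt
    using dom pos sol solt le_Sup k_nonneg by unfold_locales auto
  show ?thesis
    using lower.ordered_solutions(2) upper.ordered_solutions(2) closure_subset by blast
qed

end
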